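(* Let $n\ge1$, $G\geq1$, let $W$ be an $n\times G$ matrix and $Z$ an $n\times G$ matrix with entries in $\{0,1\}$ such that each row of $W$ has exactly one entry equal to $1$, and $Z_{ig}\le W_{ig}$ for all $i,g$. Let $n_g=\sum_iW_{ig}$ and $m_g=\sum_iZ_{ig}$, and suppose $m_g\geq 2$ and $n_g-m_g\geq2$ for all $g=1,\dots,G$. Let $M_W=I_n-W(W'W)^{-1}W'$, $P=M_WZ(Z'M_WZ)^{-1}Z'M_W$, $V=[Z,W]$ and $M_{Z,W}=I_n-V(V'V)^{-1}V'$. If $D$ is the $n\times n$ diagonal matrix with elements $$D_{ii}=\sum_{g=1}^G\frac{1}{n_g}W_{ig}\left[\frac{n_g-m_g}{m_g-1}Z_{ig}+\frac{m_g}{n_g-m_g-1}(1-Z_{ig})\right],$$ then $P_{ii}=[M_{Z,W}DM_{Z,W}]_{ii}$ for all $i=1,\dots,n$. *)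

theory Defs
  imports "HOL-Analysis.Analysis"
begin

definition hconcat :: "real^'k^'n \<Rightarrow> real^'l^'n \<Rightarrow> real^('k + 'l)^'n" where
  "hconcat A B = (\<chi> i c. case c of Inl k \<Rightarrow> A $ i $ k | Inr l \<Rightarrow> B $ i $ l)"

definition annihilator :: "real^'k^'n \<Rightarrow> real^'n^'n" where
  "annihilator X = mat 1 - X ** matrix_inv (transpose X ** X) ** transpose X"

end

theory Submission
  imports Defs
begin

(* Since every row of W has a single 1, W is the dummy matrix of a group map grp and Z is the dummy
   matrix of the treated units within their groups.  Partialling out W demeans within groups, so the
   columns of M_W Z are orthogonal and P_ii = (z_i - m/n)^2 / (m (n - m) / n) for the group of i.
   On the other side, [Z, W] is the dummy matrix of the 2G cells (group, treated or not) times an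
   invertible unitriangular matrix, so M_{Z,W} is the within-cell demeaning.  For a diagonal D that is
   constant on cells this gives (M_{Z,W} D M_{Z,W})_ii = D_ii (1 - 1/s) with s the size of the cell
   of i.  With the given D_ii both sides equal (n - m)/(n m) for treated and m/(n (n - m)) for
   control units. *)

lemma matrix_inv_eq:
  fixes A B :: "'a::field^'n^'n"
  assumes "A ** B = mat 1"
  shows "matrix_inv A = B"
proof -
  have BA: "B ** A = mat 1"
    using assms matrix_left_right_inverse by blast
  have inv: "A ** matrix_inv A = mat 1 \<and> matrix_inv A ** A = mat 1"
    unfolding matrix_inv_def by (rule someI[of _ B]) (use assms BA in blast)
  have "matrix_inv A = matrix_inv A ** (A ** B)"
    using assms by simp
  also have "\<dots> = B"
    using inv by (simp add: matrix_mul_assoc)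
  finally show ?thesis .
qed

lemma matrix_inv_right:
  fixes A :: "'a::field^'n^'n"
  assumes "invertible A"
  shows "A ** matrix_inv A = mat 1"
  using assms matrix_inv_eq by (metis invertible_right_inverse)

lemma matrix_inv_left:
  fixes A :: "'a::field^'n^'n"
  assumes "invertible A"
  shows "matrix_inv A ** A = mat 1"
  using matrix_inv_right[OF assms] matrix_left_right_inverse by blast

lemma matrix_inv_mult:
  fixes A B :: "'a::field^'n^'n"
  assumes "invertible A" and "invertible B"
  shows "matrix_inv (A ** B) = matrix_inv B ** matrix_inv A"
proof (rule matrix_inv_eq)
  have "A ** B ** (matrix_inv B ** matrix_inv A) = A ** (B ** matrix_inv B) ** matrix_inv A"
    by (simp add: matrix_mul_assoc)
  then show "A ** B ** (matrix_inv B ** matrix_inv A) = mat 1"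
    using assms by (simp add: matrix_inv_right)
qed

lemma matrix_inv_transpose:
  fixes A :: "real^'n^'n"
  assumes "invertible A"
  shows "matrix_inv (transpose A) = transpose (matrix_inv A)"
  by (rule matrix_inv_eq) (simp add: matrix_transpose_mul[symmetric] matrix_inv_left[OF assms])

lemma transpose_diff: "transpose (A - B) = transpose A - transpose B"
  by (simp add: transpose_def vec_eq_iff)

lemma transpose_annihilator:
  fixes X :: "real^'k^'n"
  assumes "invertible (transpose X ** X)"
  shows "transpose (annihilator X) = annihilator X"
  using matrix_inv_transpose[OF assms]
  by (simp add: annihilator_def transpose_diff matrix_transpose_mul matrix_mul_assoc)

lemma annihilator_mult_invertible:
  fixes U :: "real^'k^'n" and T :: "real^'k^'k"
  assumes T: "invertible T" and G: "invertible (transpose U ** U)"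
  shows "annihilator (U ** T) = annihilator U"
proof -
  let ?G = "transpose U ** U"
  have "matrix_inv (transpose (U ** T) ** (U ** T)) = matrix_inv (transpose T ** (?G ** T))"
    by (simp add: matrix_transpose_mul matrix_mul_assoc)
  also have "\<dots> = matrix_inv T ** matrix_inv ?G ** matrix_inv (transpose T)"
    using T G transpose_invertible[OF T] by (simp only: matrix_inv_mult invertible_mult)
  finally have "U ** T ** matrix_inv (transpose (U ** T) ** (U ** T)) ** transpose (U ** T)
      = U ** (T ** matrix_inv T) ** matrix_inv ?G ** (matrix_inv (transpose T) ** transpose T) ** transpose U"
    by (simp add: matrix_transpose_mul matrix_mul_assoc)
  also have "\<dots> = U ** matrix_inv ?G ** transpose U"
    using T transpose_invertible[OF T] by (simp add: matrix_inv_right matrix_inv_left)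
  finally show ?thesis
    by (simp add: annihilator_def)
qed

definition diag_mat :: "('n \<Rightarrow> real) \<Rightarrow> real^'n^'n" where
  "diag_mat d = (\<chi> i j. if i = j then d i else 0)"

lemma mult_diag_mat_entry: "(X ** diag_mat d) $ i $ j = X $ i $ j * d j"
  by (simp add: matrix_matrix_mult_def diag_mat_def if_distrib if_distribR cong: if_cong)

lemma mult_diag_mat_mult_entry:
  "(X ** diag_mat d ** Y) $ i $ j = (\<Sum>k\<in>UNIV. X $ i $ k * d k * Y $ k $ j)"
  by (simp add: matrix_matrix_mult_def diag_mat_def if_distrib if_distribR cong: if_cong)

lemma diag_mat_mult_diag_mat: "diag_mat d ** diag_mat e = diag_mat (\<lambda>k. d k * e k)"
  by (simp add: vec_eq_iff mult_diag_mat_entry) (simp add: diag_mat_def)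

lemma matrix_inv_diag_mat:
  assumes "\<And>k. d k \<noteq> 0"
  shows "matrix_inv (diag_mat d) = diag_mat (\<lambda>k. 1 / d k)"
  by (rule matrix_inv_eq) (simp only: diag_mat_mult_diag_mat, simp add: assms mat_def diag_mat_def)

lemma invertible_diag_mat:
  assumes "\<And>k. d k \<noteq> 0"
  shows "invertible (diag_mat d)"
  unfolding invertible_right_inverse
  by (rule exI[of _ "diag_mat (\<lambda>k. 1 / d k)"])
    (simp only: diag_mat_mult_diag_mat, simp add: assms mat_def diag_mat_def)

lemma mult_inv_diag_mat_mult_transpose_entry:
  assumes "\<And>k. d k \<noteq> 0"
  shows "(X ** matrix_inv (diag_mat d) ** transpose Y) $ i $ j = (\<Sum>k\<in>UNIV. X $ i $ k * Y $ j $ k / d k)"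
  by (simp add: matrix_inv_diag_mat assms mult_diag_mat_mult_entry transpose_def)

lemma projection_entry_of_diagonal_gram:
  assumes "transpose M = M" and "transpose Z ** M ** Z = diag_mat d" and "\<And>k. d k \<noteq> 0"
  shows "(M ** Z ** matrix_inv (transpose Z ** M ** Z) ** transpose Z ** M) $ i $ j
    = (\<Sum>k\<in>UNIV. (M ** Z) $ i $ k * (M ** Z) $ j $ k / d k)"
proof -
  have "transpose Z ** M = transpose (M ** Z)"
    using assms(1) by (simp add: matrix_transpose_mul)
  then have "M ** Z ** matrix_inv (transpose Z ** M ** Z) ** transpose Z ** M
      = (M ** Z) ** matrix_inv (diag_mat d) ** transpose (M ** Z)"
    using assms(2) by (metis matrix_mul_assoc)
  then show ?thesis
    by (simp add: mult_inv_diag_mat_mult_transpose_entry assms(3))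
qed

definition dummy_matrix :: "('n \<Rightarrow> 'k) \<Rightarrow> real^'k^'n" where
  "dummy_matrix c = (\<chi> i k. of_bool (c i = k))"

lemma dummy_matrix_mult_entry: "(dummy_matrix c ** A) $ i $ j = A $ c i $ j"
  by (simp add: matrix_matrix_mult_def dummy_matrix_def)

lemma gram_dummy_matrix:
  "transpose (dummy_matrix c) ** dummy_matrix c = diag_mat (\<lambda>k. card {i. c i = k})"
proof -
  have "(\<Sum>i\<in>UNIV. of_bool (c i = k) * of_bool (c i = l) :: real)
      = (if k = l then card {i. c i = k} else 0)" for k l
    by (cases "k = l") (simp_all flip: of_bool_conj)
  then show ?thesis
    by (simp add: vec_eq_iff matrix_matrix_mult_def dummy_matrix_def diag_mat_def transpose_def)
qed

lemma surj_card_fiber_nonzero: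
  fixes c :: "'n::finite \<Rightarrow> 'k"
  assumes "surj c"
  shows "card {i. c i = k} \<noteq> 0"
  using assms by (simp add: surj_def) metis

lemma invertible_gram_dummy_matrix:
  fixes c :: "'n::finite \<Rightarrow> 'k::finite"
  assumes "surj c"
  shows "invertible (transpose (dummy_matrix c) ** dummy_matrix c)"
  unfolding gram_dummy_matrix
  by (rule invertible_diag_mat) (simp add: surj_card_fiber_nonzero[OF assms])

lemma annihilator_dummy_matrix_entry:
  fixes c :: "'n::finite \<Rightarrow> 'k::finite"
  assumes "surj c"
  shows "annihilator (dummy_matrix c) $ i $ j = of_bool (i = j) - of_bool (c i = c j) / card {k. c k = c i}"
proof -
  have card_nz: "real (card {i. c i = k}) \<noteq> 0" for k
    by (simp add: surj_card_fiber_nonzero[OF assms])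
  have "(\<Sum>k\<in>UNIV. dummy_matrix c $ i $ k * dummy_matrix c $ j $ k / card {l. c l = k})
      = (\<Sum>k\<in>UNIV. if k = c i then of_bool (c j = k) / card {l. c l = k} else 0)"
    by (rule sum.cong) (auto simp: dummy_matrix_def)
  also have "\<dots> = of_bool (c i = c j) / card {k. c k = c i}"
    by auto
  finally show ?thesis
    by (simp add: annihilator_def gram_dummy_matrix mult_inv_diag_mat_mult_transpose_entry[OF card_nz] mat_def)
qed

lemma annihilator_dummy_matrix_mult_entry:
  fixes c :: "'n::finite \<Rightarrow> 'k::finite"
  assumes "surj c"
  shows "(annihilator (dummy_matrix c) ** Z) $ i $ j
    = Z $ i $ j - (\<Sum>k | c k = c i. Z $ k $ j) / card {k. c k = c i}"
proof -
  define s where "s = real (card {k. c k = c i})"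
  have "annihilator (dummy_matrix c) $ i $ k * Z $ k $ j
      = of_bool (k = i) * Z $ k $ j - of_bool (c k = c i) * (Z $ k $ j / s)" for k
    by (auto simp: annihilator_dummy_matrix_entry[OF assms] s_def algebra_simps)
  then show ?thesis
    by (simp add: matrix_matrix_mult_def sum_subtractf sum_divide_distrib[symmetric] s_def)
qed

lemma annihilator_dummy_sandwich_diag_entry:
  fixes c :: "'n::finite \<Rightarrow> 'k::finite"
  assumes "surj c" and d: "\<And>k. c k = c i \<Longrightarrow> d k = d i"
  shows "(annihilator (dummy_matrix c) ** diag_mat d ** annihilator (dummy_matrix c)) $ i $ i
    = d i * (1 - 1 / card {k. c k = c i})"
proof -
  define s where "s = real (card {k. c k = c i})"
  define a b where "a = d i * (1 - 2 / s)" and "b = d i / s\<^sup>2"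
  have "s \<noteq> 0"
    using surj_card_fiber_nonzero[OF assms(1)] by (simp add: s_def)
  have "annihilator (dummy_matrix c) $ i $ k * d k * annihilator (dummy_matrix c) $ k $ i
      = of_bool (k = i) * a + of_bool (c k = c i) * b" for k
    using \<open>s \<noteq> 0\<close> d[of k]
    by (cases "k = i"; cases "c k = c i")
      (auto simp: annihilator_dummy_matrix_entry[OF assms(1)] a_def b_def s_def field_simps power2_eq_square)
  then have "(annihilator (dummy_matrix c) ** diag_mat d ** annihilator (dummy_matrix c)) $ i $ i
      = a + s * b"
    by (simp add: mult_diag_mat_mult_entry sum.distrib s_def)
  also have "\<dots> = d i * (1 - 1 / s)"
    using \<open>s \<noteq> 0\<close> by (simp add: a_def b_def field_simps power2_eq_square)
  finally show ?thesis
    by (simp add: s_def)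
qed

lemma hconcat_mult: "hconcat (A ** B) (A ** C) = A ** hconcat B C"
  by (simp add: hconcat_def matrix_matrix_mult_def vec_eq_iff split: sum.split)

lemma sum_UNIV_Plus:
  fixes f :: "'a::finite + 'b::finite \<Rightarrow> 'c::comm_monoid_add"
  shows "(\<Sum>c\<in>UNIV. f c) = (\<Sum>a\<in>UNIV. f (Inl a)) + (\<Sum>b\<in>UNIV. f (Inr b))"
  using sum.Plus[of "UNIV :: 'a set" "UNIV :: 'b set" f] by (simp add: comp_def)

lemma invertible_hconcat_unitriangular:
  "invertible (hconcat (\<chi> c g. of_bool (c = Inl g)) (\<chi> c g. of_bool (c = Inl g \<or> c = Inr g))
    :: real^('g::finite + 'g)^('g + 'g))"
  unfolding invertible_left_inverse
proof
  let ?T = "hconcat (\<chi> c g. of_bool (c = Inl g)) (\<chi> c g. of_bool (c = Inl g \<or> c = Inr g))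
    :: real^('g + 'g)^('g + 'g)"
  let ?S = "(\<chi> c e. case c of
      Inl g \<Rightarrow> of_bool (e = Inl g) - of_bool (e = Inr g)
    | Inr g \<Rightarrow> of_bool (e = Inr g)) :: real^('g + 'g)^('g + 'g)"
  have "(?S ** ?T) $ c $ d = mat 1 $ c $ d" for c d
    by (cases c; cases d) (simp_all add: matrix_matrix_mult_def hconcat_def sum_UNIV_Plus mat_def
        left_diff_distrib sum_subtractf sum_negf flip: of_bool_conj)
  then show "?S ** ?T = mat 1"
    by (simp add: vec_eq_iff)
qed

lemma card_conj_add_card_conj_not:
  "card {x :: 'a::finite. Q x \<and> P x} + card {x. Q x \<and> \<not> P x} = card {x. Q x}"
proof -
  have "{x. Q x} = {x. Q x \<and> P x} \<union> {x. Q x \<and> \<not> P x}"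
    by blast
  then show ?thesis
    by (metis (no_types, lifting) card_Un_disjoint disjoint_iff finite mem_Collect_eq)
qed

lemma correction_weight_leverage_identity:
  fixes n m :: real
  assumes "n \<noteq> 0" and "m \<noteq> 0" and "n - m \<noteq> 0" and "m - 1 \<noteq> 0" and "n - m - 1 \<noteq> 0"
  shows "(if t then (n - m) / (n * (m - 1)) * (1 - 1 / m) else m / (n * (n - m - 1)) * (1 - 1 / (n - m)))
    = (of_bool t - m / n)\<^sup>2 / (m * (1 - m / n))"
proof (cases t)
  case True
  then show ?thesis
    using assms by (simp add: field_simps power2_eq_square)
next
  case False
  define k where "k = n - m"
  have "k \<noteq> 0" and "k - 1 \<noteq> 0"
    using assms by (simp_all add: k_def)
  then have "m / (n * (k - 1)) * (1 - 1 / k) = m / (n * k)"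
    using \<open>n \<noteq> 0\<close> by (simp add: field_simps)
  also have "\<dots> = (0 - m / n)\<^sup>2 / (m * (1 - m / n))"
    using assms by (simp add: k_def field_simps power2_eq_square)
  finally show ?thesis
    using False by (simp add: k_def)
qed

locale grouped_treatment =
  fixes grp :: "'n::finite \<Rightarrow> 'g::finite" and treated :: "'n \<Rightarrow> bool"
  assumes treated_nonempty: "\<And>g. \<exists>i. grp i = g \<and> treated i"
    and control_nonempty: "\<And>g. \<exists>i. grp i = g \<and> \<not> treated i"
begin

definition treatment_matrix :: "real^'g^'n" where
  "treatment_matrix = (\<chi> i g. of_bool (grp i = g \<and> treated i))"

definition group_size :: "'g \<Rightarrow> real" where
  "group_size g = card {i. grp i = g}"

definition treated_size :: "'g \<Rightarrow> real" where
  "treated_size g = card {i. grp i = g \<and> treated i}"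

definition cell :: "'n \<Rightarrow> 'g + 'g" where
  "cell i = (if treated i then Inl (grp i) else Inr (grp i))"

definition correction_weight :: "'n \<Rightarrow> real" where
  "correction_weight i = (let n = group_size (grp i); m = treated_size (grp i) in
     if treated i then (n - m) / (n * (m - 1)) else m / (n * (n - m - 1)))"

lemma surj_grp: "surj grp"
  using treated_nonempty by (metis surjI)

lemma surj_cell: "surj cell"
proof -
  have "c \<in> range cell" for c
    using treated_nonempty control_nonempty by (cases c) (metis cell_def rangeI)+
  then show ?thesis
    by blast
qed

lemma control_size: "card {i. grp i = g \<and> \<not> treated i} = group_size g - treated_size g"
  using card_conj_add_card_conj_not[of "\<lambda>i. grp i = g" treated]
  by (simp add: group_size_def treated_size_def flip: of_nat_add)

lemma card_cell:
  "card {k. cell k = cell i}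
    = (if treated i then treated_size (grp i) else group_size (grp i) - treated_size (grp i))"
proof -
  have "{k. cell k = cell i}
      = (if treated i then {k. grp k = grp i \<and> treated k} else {k. grp k = grp i \<and> \<not> treated k})"
    by (auto simp: cell_def split: if_splits)
  then show ?thesis
    by (simp add: treated_size_def control_size)
qed

lemma group_size_nonzero: "group_size g \<noteq> 0"
  using treated_nonempty[of g] by (auto simp: group_size_def card_eq_0_iff)

lemma treated_size_nonzero: "treated_size g \<noteq> 0"
  using treated_nonempty[of g] by (auto simp: treated_size_def card_eq_0_iff)

lemma control_size_nonzero: "group_size g - treated_size g \<noteq> 0"
proof -
  have "card {i. grp i = g \<and> \<not> treated i} \<noteq> 0"
    using control_nonempty[of g] by (auto simp: card_eq_0_iff)
  then show ?thesis
    by (metis control_size of_nat_eq_0_iff)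
qed

lemma group_column_sum: "(\<Sum>k\<in>UNIV. dummy_matrix grp $ k $ g) = group_size g"
  by (simp add: dummy_matrix_def group_size_def)

lemma treatment_column_sum: "(\<Sum>k\<in>UNIV. treatment_matrix $ k $ g) = treated_size g"
  by (simp add: treatment_matrix_def treated_size_def)

lemma demeaned_treatment_entry:
  "(annihilator (dummy_matrix grp) ** treatment_matrix) $ i $ g
    = of_bool (grp i = g) * (of_bool (treated i) - treated_size g / group_size g)"
proof -
  have "(\<Sum>k | grp k = grp i. treatment_matrix $ k $ g) = of_bool (grp i = g) * treated_size g"
    by (auto simp: treatment_matrix_def treated_size_def Int_def conj_commute intro!: arg_cong[where f = card])
  then show ?thesis
    by (simp add: annihilator_dummy_matrix_mult_entry[OF surj_grp] group_size_def[symmetric])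
      (simp add: treatment_matrix_def)
qed

lemma treatment_gram_demeaned:
  "transpose treatment_matrix ** annihilator (dummy_matrix grp) ** treatment_matrix
    = diag_mat (\<lambda>g. treated_size g * (1 - treated_size g / group_size g))"
proof -
  define X where "X = annihilator (dummy_matrix grp) ** treatment_matrix"
  have "treatment_matrix $ i $ g * X $ i $ h
      = of_bool (grp i = g \<and> treated i) * (of_bool (g = h) * (1 - treated_size g / group_size g))"
    for i g h
    unfolding X_def demeaned_treatment_entry by (auto simp: treatment_matrix_def)
  then have "(transpose treatment_matrix ** X) $ g $ h
      = treated_size g * (of_bool (g = h) * (1 - treated_size g / group_size g))" for g h
    unfolding matrix_matrix_mult_def[of "transpose treatment_matrix"]
    by (simp add: transpose_def treated_size_def)
  then show ?thesis
    by (simp add: vec_eq_iff X_def matrix_mul_assoc diag_mat_def)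
qed

lemma projection_diag_entry:
  "(annihilator (dummy_matrix grp) ** treatment_matrix
      ** matrix_inv (transpose treatment_matrix ** annihilator (dummy_matrix grp) ** treatment_matrix)
      ** transpose treatment_matrix ** annihilator (dummy_matrix grp)) $ i $ i
    = (of_bool (treated i) - treated_size (grp i) / group_size (grp i))\<^sup>2
      / (treated_size (grp i) * (1 - treated_size (grp i) / group_size (grp i)))"
proof -
  have "treated_size g * (1 - treated_size g / group_size g) \<noteq> 0" for g
    using treated_size_nonzero[of g] group_size_nonzero[of g] control_size_nonzero[of g]
    by (simp add: field_simps)
  then have "(annihilator (dummy_matrix grp) ** treatment_matrix
      ** matrix_inv (transpose treatment_matrix ** annihilator (dummy_matrix grp) ** treatment_matrix)
      ** transpose treatment_matrix ** annihilator (dummy_matrix grp)) $ i $ i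
    = (\<Sum>g\<in>UNIV. (annihilator (dummy_matrix grp) ** treatment_matrix) $ i $ g
        * (annihilator (dummy_matrix grp) ** treatment_matrix) $ i $ g
        / (treated_size g * (1 - treated_size g / group_size g)))"
    by (rule projection_entry_of_diagonal_gram[OF
        transpose_annihilator[OF invertible_gram_dummy_matrix[OF surj_grp]] treatment_gram_demeaned])
  also have "\<dots> = (\<Sum>g\<in>UNIV. if g = grp i then (of_bool (treated i) - treated_size g / group_size g)\<^sup>2
        / (treated_size g * (1 - treated_size g / group_size g)) else 0)"
    unfolding demeaned_treatment_entry by (intro sum.cong) (auto simp: power2_eq_square)
  finally show ?thesis
    by simp
qed

text \<open>Column by column, Z and W are the dummies of the treated cell of a group and of both of its
  cells; the change of basis between the two is unitriangular.\<close>

lemma annihilator_treatment_and_groups: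
  "annihilator (hconcat treatment_matrix (dummy_matrix grp)) = annihilator (dummy_matrix cell)"
proof -
  let ?E = "(\<chi> c g. of_bool (c = Inl g)) :: real^'g^('g + 'g)"
  let ?F = "(\<chi> c g. of_bool (c = Inl g \<or> c = Inr g)) :: real^'g^('g + 'g)"
  have "treatment_matrix = dummy_matrix cell ** ?E"
    by (simp add: vec_eq_iff dummy_matrix_mult_entry treatment_matrix_def cell_def)
  moreover have "dummy_matrix grp = dummy_matrix cell ** ?F"
    by (simp add: vec_eq_iff dummy_matrix_mult_entry) (simp add: dummy_matrix_def cell_def)
  ultimately show ?thesis
    by (simp only: hconcat_mult annihilator_mult_invertible invertible_hconcat_unitriangular
        invertible_gram_dummy_matrix surj_cell)
qed

lemma corrected_sandwich_diag_entry:
  "(annihilator (hconcat treatment_matrix (dummy_matrix grp)) ** diag_mat correction_weight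
      ** annihilator (hconcat treatment_matrix (dummy_matrix grp))) $ i $ i
    = correction_weight i * (1 - 1 / card {k. cell k = cell i})"
  unfolding annihilator_treatment_and_groups
  by (rule annihilator_dummy_sandwich_diag_entry[OF surj_cell])
    (auto simp: cell_def correction_weight_def split: if_splits)

theorem projection_diag_eq_corrected_sandwich:
  assumes "treated_size (grp i) \<noteq> 1" and "group_size (grp i) - treated_size (grp i) \<noteq> 1"
  shows "(annihilator (dummy_matrix grp) ** treatment_matrix
      ** matrix_inv (transpose treatment_matrix ** annihilator (dummy_matrix grp) ** treatment_matrix)
      ** transpose treatment_matrix ** annihilator (dummy_matrix grp)) $ i $ i
    = (annihilator (hconcat treatment_matrix (dummy_matrix grp)) ** diag_mat correction_weight
      ** annihilator (hconcat treatment_matrix (dummy_matrix grp))) $ i $ i"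
proof -
  define n m where "n = group_size (grp i)" and "m = treated_size (grp i)"
  have nz: "n \<noteq> 0" "m \<noteq> 0" "n - m \<noteq> 0" "m - 1 \<noteq> 0" "n - m - 1 \<noteq> 0"
    using assms group_size_nonzero treated_size_nonzero control_size_nonzero
    by (simp_all add: n_def m_def)
  have "(annihilator (hconcat treatment_matrix (dummy_matrix grp)) ** diag_mat correction_weight
      ** annihilator (hconcat treatment_matrix (dummy_matrix grp))) $ i $ i
    = (if treated i then (n - m) / (n * (m - 1)) * (1 - 1 / m) else m / (n * (n - m - 1)) * (1 - 1 / (n - m)))"
    by (simp add: corrected_sandwich_diag_entry card_cell correction_weight_def Let_def n_def m_def)
  also have "\<dots> = (of_bool (treated i) - m / n)\<^sup>2 / (m * (1 - m / n))"
    using nz by (rule correction_weight_leverage_identity)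
  finally show ?thesis
    by (simp add: projection_diag_entry n_def m_def)
qed

lemma correction_weight_eq_group_sum:
  "(\<Sum>g\<in>UNIV.
      (let ng = (\<Sum>k\<in>UNIV. dummy_matrix grp $ k $ g); mg = (\<Sum>k\<in>UNIV. treatment_matrix $ k $ g) in
        (1 / ng) * dummy_matrix grp $ i $ g *
          ((ng - mg) / (mg - 1) * treatment_matrix $ i $ g + mg / (ng - mg - 1) * (1 - treatment_matrix $ i $ g))))
    = correction_weight i"
proof -
  have "(\<Sum>g\<in>UNIV.
      (let ng = (\<Sum>k\<in>UNIV. dummy_matrix grp $ k $ g); mg = (\<Sum>k\<in>UNIV. treatment_matrix $ k $ g) in
        (1 / ng) * dummy_matrix grp $ i $ g *
          ((ng - mg) / (mg - 1) * treatment_matrix $ i $ g + mg / (ng - mg - 1) * (1 - treatment_matrix $ i $ g))))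
    = (\<Sum>g\<in>UNIV. if g = grp i then correction_weight i else 0)"
    unfolding group_column_sum treatment_column_sum
    by (intro sum.cong) (auto simp: dummy_matrix_def treatment_matrix_def correction_weight_def Let_def)
  then show ?thesis
    by simp
qed

end

lemma zero_one_design_grouped:
  fixes W Z :: "real^'g^'n"
  assumes W01: "\<forall>i g. W $ i $ g \<in> {0, 1}" and Z01: "\<forall>i g. Z $ i $ g \<in> {0, 1}"
    and Wrow: "\<forall>i. \<exists>!g. W $ i $ g = 1" and ZleW: "\<forall>i g. Z $ i $ g \<le> W $ i $ g"
  obtains grp treated where "W = dummy_matrix grp" and "Z = (\<chi> i g. of_bool (grp i = g \<and> treated i))"
proof
  define grp where "grp i = (THE g. W $ i $ g = 1)" for i
  have W_grp: "W $ i $ g = 1 \<longleftrightarrow> grp i = g" for i g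
    using Wrow theI'[OF Wrow[rule_format, of i]] unfolding grp_def by metis
  show "W = dummy_matrix grp"
    using W01 W_grp by (auto simp: vec_eq_iff dummy_matrix_def)
  have Z_grp: "Z $ i $ g = of_bool (grp i = g \<and> Z $ i $ grp i = 1)" for i g
  proof (cases "grp i = g")
    case False
    then have "W $ i $ g = 0"
      using W01 W_grp by blast
    then show ?thesis
      using False Z01[rule_format, of i g] ZleW[rule_format, of i g] by auto
  next
    case True
    then show ?thesis
      using Z01[rule_format, of i g] by auto
  qed
  show "Z = (\<chi> i g. of_bool (grp i = g \<and> Z $ i $ grp i = 1))"
    unfolding vec_eq_iff vec_lambda_beta using Z_grp by blast
qed

theorem lemma5:
  fixes W Z :: "real^'g^'n"
    and D :: "real^'n^'n"
  assumes W01: "\<forall>i g. W $ i $ g \<in> {0, 1}"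
    and Z01: "\<forall>i g. Z $ i $ g \<in> {0, 1}"
    and Wrow: "\<forall>i. \<exists>!g. W $ i $ g = 1"
    and ZleW: "\<forall>i g. Z $ i $ g \<le> W $ i $ g"
    and mge2: "\<forall>g. (\<Sum>i\<in>UNIV. Z $ i $ g) \<ge> 2"
    and nmge2: "\<forall>g. (\<Sum>i\<in>UNIV. W $ i $ g) - (\<Sum>i\<in>UNIV. Z $ i $ g) \<ge> 2"
    and D_def: "D = (\<chi> i j. if i = j then
        (\<Sum>g\<in>UNIV.
          (let ng = (\<Sum>k\<in>UNIV. W $ k $ g); mg = (\<Sum>k\<in>UNIV. Z $ k $ g) in
            (1 / ng) * W $ i $ g *
              ((ng - mg) / (mg - 1) * Z $ i $ g + mg / (ng - mg - 1) * (1 - Z $ i $ g))))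
        else 0)"
  shows "\<forall>i. (let MW = annihilator W;
               P = MW ** Z ** matrix_inv (transpose Z ** MW ** Z) ** transpose Z ** MW;
               MZW = annihilator (hconcat Z W)
           in P $ i $ i = (MZW ** D ** MZW) $ i $ i)"
proof -
  obtain grp treated where W_dummy: "W = dummy_matrix grp"
    and Z_treated: "Z = (\<chi> i g. of_bool (grp i = g \<and> treated i))"
    using zero_one_design_grouped[OF W01 Z01 Wrow ZleW] .
  have treated_ge2: "2 \<le> real (card {i. grp i = g \<and> treated i})" for g
    using mge2 by (simp add: Z_treated)
  have control_ge2: "2 \<le> real (card {i. grp i = g \<and> \<not> treated i})" for g
    using nmge2[rule_format, of g]
      card_conj_add_card_conj_not[of "\<lambda>i. grp i = g" treated, THEN arg_cong[where f = real]]
    by (simp add: W_dummy Z_treated dummy_matrix_def)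
  have "{i. grp i = g \<and> treated i} \<noteq> {}" and "{i. grp i = g \<and> \<not> treated i} \<noteq> {}" for g
    using treated_ge2[of g] control_ge2[of g] by (metis card.empty of_nat_0 not_numeral_le_zero)+
  then interpret grouped_treatment grp treated
    by unfold_locales blast+
  have "treated_size g \<noteq> 1" and "group_size g - treated_size g \<noteq> 1" for g
    using treated_ge2[of g] control_ge2[of g] by (simp_all only: treated_size_def control_size)
  moreover have "Z = treatment_matrix" and "D = diag_mat correction_weight"
    unfolding Z_treated D_def W_dummy treatment_matrix_def diag_mat_def
      correction_weight_eq_group_sum[symmetric]
    by simp_all
  ultimately show ?thesis
    unfolding Let_def W_dummy using projection_diag_eq_corrected_sandwich by simp
qed

end
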